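(* Let $X$ be an exponential vector space over a field $K$, let $B$ be a basis of $X\smallsetminus X_0$ and let $x\in B$. Then for every $y\in X\smallsetminus X_0$ with $y\leq x$, the set $(B\smallsetminus\{x\})\cup\{y\}$ is also a basis of $X\smallsetminus X_0$.
   Context: An exponential vector space (evs) over a field $K$ is a partially ordered set $(X,\leq)$ with a binary operation $+$ on $X$ and a map $K\times X\to X$, $(\alpha,x)\mapsto \alpha x$, such that: (A1) $(X,+)$ is a commutative semigroup with identity $\theta$; (A2) $x\leq y$ implies $x+z\leq y+z$ and $\alpha x\leq \alpha y$ for all $z\in X$, $\alpha\in K$; (A3) $\alpha(x+y)=\alpha x+\alpha y$, $\alpha(\beta x)=(\alpha\beta)x$, $(\alpha+\beta)x\leq \alpha x+\beta x$, $1x=x$; (A4) $\alpha x=\theta$ iff $\alpha=0$ or $x=\theta$; (A5) $x+(-1)x=\theta$ iff $x\in X_0$, where $X_0:=\{z\in X: y\not\leq z \text{ for all } y\in X\smallsetminus\{z\}\}$ (the set of minimal elements, called the primitive space; it is a vector space over $K$); (A6) for each $x\in X$ there is $p\in X_0$ with $p\leq x$. For $x\in X\smallsetminus X_0$ let $L(x):=\{z\in X: z\geq \alpha x+p \text{ for some } \alpha\in K\smallsetminus\{0\},\ p\in X_0\}$. A subset $B\subseteq X\smallsetminus X_0$ generates $X\smallsetminus X_0$ if $X\smallsetminus X_0=\bigcup_{b\in B}L(b)$. Elements $x,y\in X\smallsetminus X_0$ are orderly dependent if $x\in L(y)$ or $y\in L(x)$, and orderly independent otherwise; $B\subseteq X\smallsetminus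 X_0$ is orderly independent if any two distinct members of $B$ are orderly independent. A basis of $X\smallsetminus X_0$ is an orderly independent subset of $X\smallsetminus X_0$ that generates $X\smallsetminus X_0$. *)

theory Defs
  imports Main
begin

text \<open>An exponential vector space over a field 'k. The underlying set X is the
whole type 'x; le is the partial order, add the addition with identity theta,
smul the scalar multiplication.\<close>

definition primitive :: "('x \<Rightarrow> 'x \<Rightarrow> bool) \<Rightarrow> 'x set" where
  "primitive le = {z. \<forall>y. y \<noteq> z \<longrightarrow> \<not> le y z}"

definition evs :: "('x \<Rightarrow> 'x \<Rightarrow> bool) \<Rightarrow> ('x \<Rightarrow> 'x \<Rightarrow> 'x) \<Rightarrow> 'x
    \<Rightarrow> ('k::field \<Rightarrow> 'x \<Rightarrow> 'x) \<Rightarrow> bool" where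
  "evs le add theta smul \<longleftrightarrow>
     \<comment> \<open>partial order\<close>
     (\<forall>x. le x x) \<and> (\<forall>x y. le x y \<and> le y x \<longrightarrow> x = y) \<and>
     (\<forall>x y z. le x y \<and> le y z \<longrightarrow> le x z) \<and>
     \<comment> \<open>A1\<close>
     (\<forall>x y z. add (add x y) z = add x (add y z)) \<and>
     (\<forall>x y. add x y = add y x) \<and> (\<forall>x. add x theta = x) \<and>
     \<comment> \<open>A2\<close>
     (\<forall>x y z. le x y \<longrightarrow> le (add x z) (add y z)) \<and>
     (\<forall>x y a. le x y \<longrightarrow> le (smul a x) (smul a y)) \<and>
     \<comment> \<open>A3\<close>
     (\<forall>a x y. smul a (add x y) = add (smul a x) (smul a y)) \<and>
     (\<forall>a b x. smul a (smul b x) = smul (a * b) x) \<and>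
     (\<forall>a b x. le (smul (a + b) x) (add (smul a x) (smul b x))) \<and>
     (\<forall>x. smul 1 x = x) \<and>
     \<comment> \<open>A4\<close>
     (\<forall>a x. smul a x = theta \<longleftrightarrow> a = 0 \<or> x = theta) \<and>
     \<comment> \<open>A5\<close>
     (\<forall>x. add x (smul (-1) x) = theta \<longleftrightarrow> x \<in> primitive le) \<and>
     \<comment> \<open>A6\<close>
     (\<forall>x. \<exists>p \<in> primitive le. le p x)"

definition Lset :: "('x \<Rightarrow> 'x \<Rightarrow> bool) \<Rightarrow> ('x \<Rightarrow> 'x \<Rightarrow> 'x)
    \<Rightarrow> ('k::field \<Rightarrow> 'x \<Rightarrow> 'x) \<Rightarrow> 'x \<Rightarrow> 'x set" where
  "Lset le add smul x =
     {z. \<exists>a p. a \<noteq> 0 \<and> p \<in> primitive le \<and> le (add (smul a x) p) z}"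

definition generates :: "('x \<Rightarrow> 'x \<Rightarrow> bool) \<Rightarrow> ('x \<Rightarrow> 'x \<Rightarrow> 'x)
    \<Rightarrow> ('k::field \<Rightarrow> 'x \<Rightarrow> 'x) \<Rightarrow> 'x set \<Rightarrow> bool" where
  "generates le add smul B \<longleftrightarrow>
     B \<subseteq> - primitive le \<and> - primitive le = (\<Union>b\<in>B. Lset le add smul b)"

definition orderly_independent_pair :: "('x \<Rightarrow> 'x \<Rightarrow> bool) \<Rightarrow> ('x \<Rightarrow> 'x \<Rightarrow> 'x)
    \<Rightarrow> ('k::field \<Rightarrow> 'x \<Rightarrow> 'x) \<Rightarrow> 'x \<Rightarrow> 'x \<Rightarrow> bool" where
  "orderly_independent_pair le add smul x y \<longleftrightarrow>
     \<not> (x \<in> Lset le add smul y \<or> y \<in> Lset le add smul x)"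

definition orderly_independent :: "('x \<Rightarrow> 'x \<Rightarrow> bool) \<Rightarrow> ('x \<Rightarrow> 'x \<Rightarrow> 'x)
    \<Rightarrow> ('k::field \<Rightarrow> 'x \<Rightarrow> 'x) \<Rightarrow> 'x set \<Rightarrow> bool" where
  "orderly_independent le add smul B \<longleftrightarrow>
     B \<subseteq> - primitive le \<and>
     (\<forall>x\<in>B. \<forall>y\<in>B. x \<noteq> y \<longrightarrow> orderly_independent_pair le add smul x y)"

definition evs_basis :: "('x \<Rightarrow> 'x \<Rightarrow> bool) \<Rightarrow> ('x \<Rightarrow> 'x \<Rightarrow> 'x)
    \<Rightarrow> ('k::field \<Rightarrow> 'x \<Rightarrow> 'x) \<Rightarrow> 'x set \<Rightarrow> bool" where
  "evs_basis le add smul B \<longleftrightarrow>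
     orderly_independent le add smul B \<and> generates le add smul B"

end

theory Submission
  imports Defs
begin

text \<open>The sets L(x) are upward closed, contain x, and are transitive: z \<in> L(w) and
w \<in> L(v) give z \<in> L(v), because primitive elements are closed under addition and
scaling. If y \<le> x with x \<in> B, then y lies in some L(b) with b \<in> B, hence so does x,
and independence forces b = x; thus x and y generate each other and L(y) = L(x).
Replacing a basis element by one with the same L-set preserves both generation and
orderly independence.\<close>

locale exp_vector_space =
  fixes le :: "'x \<Rightarrow> 'x \<Rightarrow> bool" and add :: "'x \<Rightarrow> 'x \<Rightarrow> 'x" and theta :: 'x
    and smul :: "'k::field \<Rightarrow> 'x \<Rightarrow> 'x"
  assumes le_refl: "le x x"
    and le_trans: "le x y \<Longrightarrow> le y z \<Longrightarrow> le x z"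
    and add_assoc: "add (add x y) z = add x (add y z)"
    and add_commute: "add x y = add y x"
    and add_theta: "add x theta = x"
    and add_le_add_right: "le x y \<Longrightarrow> le (add x z) (add y z)"
    and smul_le_smul: "le x y \<Longrightarrow> le (smul a x) (smul a y)"
    and smul_add: "smul a (add x y) = add (smul a x) (smul a y)"
    and smul_smul: "smul a (smul b x) = smul (a * b) x"
    and smul_one: "smul 1 x = x"
    and smul_eq_theta_iff: "smul a x = theta \<longleftrightarrow> a = 0 \<or> x = theta"
    and primitive_iff_add_neg: "x \<in> primitive le \<longleftrightarrow> add x (smul (-1) x) = theta"

lemma exp_vector_space_if_evs:
  "evs le add theta smul \<Longrightarrow> exp_vector_space le add theta smul"
  unfolding evs_def by unfold_locales (elim conjE; metis)+

context exp_vector_space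
begin

abbreviation L :: "'x \<Rightarrow> 'x set" where
  "L \<equiv> Lset le add smul"

lemma theta_primitive: "theta \<in> primitive le"
  using primitive_iff_add_neg smul_eq_theta_iff add_theta by metis

lemma primitive_smul:
  assumes "q \<in> primitive le"
  shows "smul a q \<in> primitive le"
proof -
  have "add (smul a q) (smul (-1) (smul a q)) = smul a (add q (smul (-1) q))"
    by (simp add: smul_smul smul_add mult.commute)
  also have "\<dots> = theta"
    using assms by (simp add: primitive_iff_add_neg smul_eq_theta_iff)
  finally show ?thesis
    by (simp add: primitive_iff_add_neg)
qed

lemma primitive_add:
  assumes "p \<in> primitive le" and "q \<in> primitive le"
  shows "add p q \<in> primitive le"
proof -
  have "add (add p q) (smul (-1) (add p q))
      = add (add p (smul (-1) p)) (add q (smul (-1) q))"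
    by (metis smul_add add_assoc add_commute)
  also have "\<dots> = theta"
    using assms by (simp add: primitive_iff_add_neg add_theta)
  finally show ?thesis
    by (simp add: primitive_iff_add_neg)
qed

lemma Lset_if_le: "le w z \<Longrightarrow> z \<in> L w"
  unfolding Lset_def
  by (intro CollectI exI[of _ 1] exI[of _ theta]) (simp add: theta_primitive add_theta smul_one)

lemma Lset_refl: "w \<in> L w"
  by (rule Lset_if_le[OF le_refl])

lemma Lset_trans:
  assumes "z \<in> L w" and "w \<in> L v"
  shows "z \<in> L v"
proof -
  obtain a p where a: "a \<noteq> 0" and p: "p \<in> primitive le" and z: "le (add (smul a w) p) z"
    using assms(1) unfolding Lset_def by blast
  obtain b q where b: "b \<noteq> 0" and q: "q \<in> primitive le" and w: "le (add (smul b v) q) w"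
    using assms(2) unfolding Lset_def by blast
  have "le (add (smul (a * b) v) (smul a q)) (smul a w)"
    using smul_le_smul[OF w] by (simp add: smul_add smul_smul)
  then have "le (add (smul (a * b) v) (add (smul a q) p)) (add (smul a w) p)"
    using add_le_add_right add_assoc by metis
  then have "le (add (smul (a * b) v) (add (smul a q) p)) z"
    using z le_trans by blast
  moreover have "add (smul a q) p \<in> primitive le"
    using primitive_add[OF primitive_smul[OF q] p] .
  moreover have "a * b \<noteq> 0"
    using a b by simp
  ultimately show ?thesis
    unfolding Lset_def by blast
qed

lemma Lset_upward_closed: "z \<in> L w \<Longrightarrow> le z z' \<Longrightarrow> z' \<in> L w"
  using Lset_trans Lset_if_le by blast

lemma Lset_eqI: "x \<in> L y \<Longrightarrow> y \<in> L x \<Longrightarrow> L x = L y"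
  using Lset_trans by blast

lemma evs_basis_Lset_eq_if_le:
  assumes basis: "evs_basis le add smul B" and "x \<in> B"
    and "y \<notin> primitive le" and "le y x"
  shows "L y = L x"
proof -
  obtain b where "b \<in> B" and yb: "y \<in> L b"
    using basis \<open>y \<notin> primitive le\<close> unfolding evs_basis_def generates_def by blast
  moreover have "x \<in> L b"
    using Lset_upward_closed[OF yb \<open>le y x\<close>] .
  ultimately have "b = x"
    using basis \<open>x \<in> B\<close>
    unfolding evs_basis_def orderly_independent_def orderly_independent_pair_def by blast
  with yb show ?thesis
    using Lset_eqI Lset_if_le[OF \<open>le y x\<close>] by blast
qed

lemma evs_basis_exchange:
  assumes basis: "evs_basis le add smul B" and "x \<in> B"
    and "y \<notin> primitive le" and Lyx: "L y = L x"
  shows "evs_basis le add smul ((B - {x}) \<union> {y})"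
proof -
  have gen: "- primitive le = (\<Union>b\<in>B. L b)" and sub: "B \<subseteq> - primitive le"
    using basis unfolding evs_basis_def generates_def by auto
  have ind: "u \<notin> L v" if "u \<in> B" "v \<in> B" "u \<noteq> v" for u v
    using basis that
    unfolding evs_basis_def orderly_independent_def orderly_independent_pair_def by blast
  have "(\<Union>b\<in>(B - {x}) \<union> {y}. L b) = (\<Union>b\<in>B. L b)"
    using \<open>x \<in> B\<close> Lyx by blast
  then have "generates le add smul ((B - {x}) \<union> {y})"
    unfolding generates_def using gen sub \<open>y \<notin> primitive le\<close> by auto
  moreover have "c \<notin> L y" and "y \<notin> L c" if "c \<in> B" and "c \<noteq> x" for c
  proof -
    show "c \<notin> L y"
      using ind[of c x] that \<open>x \<in> B\<close> Lyx by simp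
    show "y \<notin> L c"
    proof
      assume "y \<in> L c"
      moreover have "x \<in> L y"
        using Lyx Lset_refl by simp
      ultimately have "x \<in> L c"
        using Lset_trans by blast
      then show False
        using ind[of x c] that \<open>x \<in> B\<close> by simp
    qed
  qed
  then have "orderly_independent le add smul ((B - {x}) \<union> {y})"
    unfolding orderly_independent_def orderly_independent_pair_def
    using sub \<open>y \<notin> primitive le\<close> ind by auto
  ultimately show ?thesis
    unfolding evs_basis_def by blast
qed

end

theorem mainTheorem4:
  fixes le :: "'x \<Rightarrow> 'x \<Rightarrow> bool" and add :: "'x \<Rightarrow> 'x \<Rightarrow> 'x" and theta :: 'x
    and smul :: "'k::field \<Rightarrow> 'x \<Rightarrow> 'x"
    and B :: "'x set" and x y :: 'x
  assumes "evs le add theta smul"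
    and "evs_basis le add smul B"
    and "x \<in> B"
    and "y \<notin> primitive le"
    and "le y x"
  shows "evs_basis le add smul ((B - {x}) \<union> {y})"
proof -
  interpret exp_vector_space le add theta smul
    using assms(1) by (rule exp_vector_space_if_evs)
  have "Lset le add smul y = Lset le add smul x"
    using evs_basis_Lset_eq_if_le assms(2-5) .
  then show ?thesis
    using evs_basis_exchange assms(2-4) by blast
qed

end
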